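(* There exists a normal sequence $S\in\{0,1\}^\omega$ that is LZ-deep.
   Context: $S\upharpoonright n$ is the length-$n$ prefix of $S$. $S$ is normal if every string $x\in\{0,1\}^*$ occurs as a substring of $S$ with asymptotic frequency $2^{-|x|}$. A finite-state transducer (FST) is $T=(Q,q_0,\delta,\nu)$ with finite state set $Q$, start state $q_0$, $\delta:Q\times\{0,1\}\to Q$, $\nu:Q\times\{0,1\}\to\{0,1\}^*$; $T(\lambda)=\lambda$, $T(xb)=T(x)\nu(\hat\delta(x),b)$; $T$ is an ILFST if $x\mapsto(T(x),\hat\delta(x))$ is injective. LZ denotes the Lempel–Ziv 78 compressor: it parses $x=x_1\cdots x_n$ into phrases, each distinct from all earlier ones (except possibly the last), with $x_i=x_{l(i)}b_i$, $l(i)<i$, $b_i\in\{0,1\}$, $x_0=\lambda$; it outputs $c_{l(1)}b_1\cdots c_{l(n)}b_n$ where $c_j$ is a prefix-free encoding of the dictionary index $j$. $S$ is LZ-deep if there is $\alpha>0$ such that for every ILFST $C$, $|C(S\upharpoonright n)|-|\mathrm{LZ}(S\upharpoonright n)|\ge\alpha n$ for all but finitely many $n$. *)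

theory Defs
  imports Complex_Main
begin

text \<open>Infinite binary sequences are functions nat => bool; bits are bool (False = 0, True = 1).\<close>

definition prefix :: "(nat \<Rightarrow> bool) \<Rightarrow> nat \<Rightarrow> bool list" where
  "prefix S n = map S [0..<n]"

definition occ :: "(nat \<Rightarrow> bool) \<Rightarrow> bool list \<Rightarrow> nat \<Rightarrow> nat" where
  "occ S x n = card {i. i + length x \<le> n \<and> map S [i..<i + length x] = x}"

definition normal :: "(nat \<Rightarrow> bool) \<Rightarrow> bool" where
  "normal S \<longleftrightarrow> (\<forall>x :: bool list.
     (\<lambda>n. real (occ S x n) / real n) \<longlonglongrightarrow> 1 / 2 ^ length x)"

text \<open>Finite-state transducers T = (Q, q0, delta, nu) with states taken from nat.\<close>
type_synonym fst = "nat set \<times> nat \<times> (nat \<Rightarrow> bool \<Rightarrow> nat) \<times> (nat \<Rightarrow> bool \<Rightarrow> bool list)"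

definition is_fst :: "fst \<Rightarrow> bool" where
  "is_fst T = (case T of (Q, q0, \<delta>, \<nu>) \<Rightarrow>
      finite Q \<and> q0 \<in> Q \<and> (\<forall>q\<in>Q. \<forall>b. \<delta> q b \<in> Q))"

fun run :: "(nat \<Rightarrow> bool \<Rightarrow> nat) \<Rightarrow> (nat \<Rightarrow> bool \<Rightarrow> bool list) \<Rightarrow> nat \<Rightarrow> bool list \<Rightarrow> bool list \<times> nat" where
  "run \<delta> \<nu> q [] = ([], q)"
| "run \<delta> \<nu> q (b # x) = (let (y, q') = run \<delta> \<nu> (\<delta> q b) x in (\<nu> q b @ y, q'))"

text \<open>fst_out T x = T(x), fst_state T x = the extended transition function applied to x.\<close>
definition fst_out :: "fst \<Rightarrow> bool list \<Rightarrow> bool list" where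
  "fst_out T x = (case T of (Q, q0, \<delta>, \<nu>) \<Rightarrow> fst (run \<delta> \<nu> q0 x))"

definition fst_state :: "fst \<Rightarrow> bool list \<Rightarrow> nat" where
  "fst_state T x = (case T of (Q, q0, \<delta>, \<nu>) \<Rightarrow> snd (run \<delta> \<nu> q0 x))"

definition ILFST :: "fst \<Rightarrow> bool" where
  "ILFST T \<longleftrightarrow> is_fst T \<and> inj (\<lambda>x. (fst_out T x, fst_state T x))"

text \<open>Prefix-free encoding of dictionary indices: binary representation plus a
  self-delimiting length header (bits of the length doubled, then 01).\<close>
fun bin :: "nat \<Rightarrow> bool list" where
  "bin n = (if n = 0 then [] else bin (n div 2) @ [odd n])"

definition self_delim :: "bool list \<Rightarrow> bool list" where
  "self_delim x = concat (map (\<lambda>b. [b, b]) (bin (length x))) @ [False, True] @ x"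

definition code_idx :: "nat \<Rightarrow> bool list" where
  "code_idx j = self_delim (bin j)"

definition idx :: "bool list list \<Rightarrow> bool list \<Rightarrow> nat" where
  "idx D p = (LEAST i. i < length D \<and> D ! i = p)"

text \<open>LZ78 parsing: D is the dictionary (D!0 = empty phrase), cur the current
  (already-in-dictionary) partial phrase. Outputs pairs (l(i), b_i).\<close>
fun lz_aux :: "bool list list \<Rightarrow> bool list \<Rightarrow> bool list \<Rightarrow> (nat \<times> bool) list" where
  "lz_aux D cur [] = (if cur = [] then [] else [(idx D (butlast cur), last cur)])"
| "lz_aux D cur (b # w) =
     (if cur @ [b] \<in> set D then lz_aux D (cur @ [b]) w
      else (idx D cur, b) # lz_aux (D @ [cur @ [b]]) [] w)"

definition LZ :: "bool list \<Rightarrow> bool list" where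
  "LZ x = concat (map (\<lambda>(l, b). code_idx l @ [b]) (lz_aux [[]] [] x))"

definition LZ_deep :: "(nat \<Rightarrow> bool) \<Rightarrow> bool" where
  "LZ_deep S \<longleftrightarrow> (\<exists>\<alpha>::real. \<alpha> > 0 \<and> (\<forall>C. ILFST C \<longrightarrow>
     (\<forall>\<^sub>F n in sequentially.
        real (length (fst_out C (prefix S n))) - real (length (LZ (prefix S n))) \<ge> \<alpha> * real n)))"

end

theory Submission
  imports Defs "HOL-Library.Log_Nat" "HOL-Real_Asymp.Real_Asymp"
begin

(* The sequence is the concatenation of stages j = 0, 1, 2, ..., where stage j repeats
   block (2^j), the list of all words of length 2^j, many times.  Every word x occurs in
   block k about k 2^k / 2^|x| times, with an error of |x| 2^k, so the occurrence
   frequencies in long prefixes converge and the sequence is normal.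

   Stage j has period |block (2^j)|, which is at most the square root of every position in it.
   Hence a prefix of length n has O(t sqrt n) distinct factors of length t.  LZ78 parses a
   prefix into distinct phrases, so few phrases are short, while long phrases are few
   because they use up the prefix; this makes LZ output at most n/4 bits.

   An information-lossless transducer, started in any reachable state, maps words of
   length k injectively together with its final state, so at most |Q|^2 2^(k-d) of them are
   compressed by d bits.  On the blocks of late stages it therefore outputs at least 3/4 of
   its input, and at least n/2 bits on a prefix of length n. *)

section \<open>Words, blocks and occurrence counts\<close>

definition all_words :: "nat \<Rightarrow> bool list list" where
  "all_words k = List.n_lists k [False, True]"

lemma set_all_words: "set (all_words k) = {w. length w = k}"
  by (auto simp: all_words_def set_n_lists)

lemma length_all_words: "length (all_words k) = 2 ^ k"
  by (simp add: all_words_def length_n_lists numeral_2_eq_2)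

lemma distinct_all_words: "distinct (all_words k)"
  by (simp add: all_words_def distinct_n_lists)

lemma card_words_length: "card {w :: bool list. length w = k} = 2 ^ k"
  by (metis distinct_all_words distinct_card length_all_words set_all_words)

lemma finite_words_length: "finite {w :: bool list. length w = k}"
  by (metis List.finite_set set_all_words)

lemma card_words_with_factor_at:
  assumes "i + length x \<le> k"
  shows "card {w :: bool list. length w = k \<and> take (length x) (drop i w) = x} = 2 ^ (k - length x)"
proof -
  let ?U = "{u :: bool list. length u = i}" and ?V = "{v :: bool list. length v = k - i - length x}"
  let ?f = "\<lambda>(u, v). u @ x @ v"
  have eq: "{w. length w = k \<and> take (length x) (drop i w) = x} = ?f ` (?U \<times> ?V)"
  proof (intro equalityI subsetI)
    fix w assume w: "w \<in> {w. length w = k \<and> take (length x) (drop i w) = x}"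
    have "w = take i w @ take (length x) (drop i w) @ drop (length x) (drop i w)"
      by (simp only: append_take_drop_id)
    then have "w = ?f (take i w, drop (i + length x) w)"
      using w by (simp add: add.commute)
    moreover have "(take i w, drop (i + length x) w) \<in> ?U \<times> ?V"
      using w assms by auto
    ultimately show "w \<in> ?f ` (?U \<times> ?V)"
      by (rule image_eqI)
  qed (use assms in auto)
  have inj: "inj_on ?f (?U \<times> ?V)"
  proof (rule inj_onI)
    fix p q assume p: "p \<in> ?U \<times> ?V" and q: "q \<in> ?U \<times> ?V" and e: "?f p = ?f q"
    obtain u v u' v' where pq: "p = (u, v)" "q = (u', v')"
      by (cases p, cases q)
    have "length u = length u'"
      using p q pq by simp
    moreover have "u @ x @ v = u' @ x @ v'"
      using e pq by simp
    ultimately show "p = q"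
      using pq by simp
  qed
  have "card {w. length w = k \<and> take (length x) (drop i w) = x} = card (?U \<times> ?V)"
    unfolding eq by (rule card_image[OF inj])
  also have "\<dots> = 2 ^ (i + (k - i - length x))"
    by (simp add: card_cartesian_product card_words_length power_add)
  also have "i + (k - i - length x) = k - length x"
    using assms by simp
  finally show ?thesis .
qed

definition block :: "nat \<Rightarrow> bool list" where
  "block k = concat (all_words k)"

lemma length_block: "length (block k) = k * 2 ^ k"
proof -
  have "length (block k) = (\<Sum>w\<leftarrow>all_words k. k)"
    unfolding block_def length_concat
    by (intro arg_cong[where f = sum_list] map_cong) (auto simp: set_all_words)
  then show ?thesis by (simp add: sum_list_triv length_all_words)
qed

definition occs :: "bool list \<Rightarrow> bool list \<Rightarrow> nat" where
  "occs x u = card {i. i + length x \<le> length u \<and> take (length x) (drop i u) = x}"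

lemma occ_eq_occs_prefix: "occ S x n = occs x (prefix S n)"
proof -
  have len: "length (prefix S n) = n"
    by (simp add: prefix_def)
  have "map S [i..<i + length x] = take (length x) (drop i (prefix S n))" if "i + length x \<le> n" for i
    using that by (simp add: prefix_def drop_map take_map)
  then have "{i. i + length x \<le> n \<and> map S [i..<i + length x] = x}
      = {i. i + length x \<le> length (prefix S n) \<and> take (length x) (drop i (prefix S n)) = x}"
    unfolding len by auto
  then show ?thesis
    unfolding occ_def occs_def by simp
qed

lemma occs_Nil: "occs [] u = length u + 1"
  by (simp add: occs_def atMost_def[symmetric])

lemma occs_le_length:
  assumes "x \<noteq> []" shows "occs x u \<le> length u"
proof -
  have "{i. i + length x \<le> length u \<and> take (length x) (drop i u) = x} \<subseteq> {..<length u}"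
    using assms by (cases x) auto
  then show ?thesis unfolding occs_def by (metis card_lessThan card_mono finite_lessThan)
qed

lemma occs_append_ge:
  assumes "x \<noteq> []" shows "occs x u + occs x v \<le> occs x (u @ v)"
proof -
  let ?A = "\<lambda>u. {i. i + length x \<le> length u \<and> take (length x) (drop i u) = x}"
  have fin: "finite (?A w)" for w by (rule finite_subset[of _ "{..length w}"]) auto
  have "occs x u + occs x v = card (?A u) + card ((+) (length u) ` ?A v)"
    unfolding occs_def by (simp add: card_image)
  also have "\<dots> = card (?A u \<union> (+) (length u) ` ?A v)"
    using assms by (intro card_Un_disjoint[symmetric]) (auto simp: fin)
  also have "\<dots> \<le> card (?A (u @ v))"
    by (rule card_mono[OF fin]) auto
  finally show ?thesis unfolding occs_def .
qed

lemma occs_append_le: "occs x (u @ v) \<le> occs x u + occs x v + length x"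
proof -
  let ?A = "\<lambda>u. {i. i + length x \<le> length u \<and> take (length x) (drop i u) = x}"
  have fin: "finite (?A w)" for w by (rule finite_subset[of _ "{..length w}"]) auto
  have "?A (u @ v) \<subseteq> ?A u \<union> (+) (length u) ` ?A v \<union> {length u - length x..<length u}"
  proof
    fix i assume i: "i \<in> ?A (u @ v)"
    consider "i + length x \<le> length u" | "length u \<le> i" | "length u - length x \<le> i" "i < length u"
      by linarith
    then show "i \<in> ?A u \<union> (+) (length u) ` ?A v \<union> {length u - length x..<length u}"
    proof cases
      case 2
      then have "i - length u \<in> ?A v" using i by auto
      then show ?thesis using 2 by (auto intro!: image_eqI[of i _ "i - length u"])
    qed (use i in auto)
  qed
  then have "occs x (u @ v) \<le> card (?A u \<union> (+) (length u) ` ?A v \<union> {length u - length x..<length u})"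
    unfolding occs_def by (intro card_mono) (auto simp: fin)
  also have "\<dots> \<le> card (?A u) + card ((+) (length u) ` ?A v) + card {length u - length x..<length u}"
    by (meson add_le_mono card_Un_le le_refl order_trans)
  also have "\<dots> \<le> card (?A u) + card (?A v) + length x"
    by (intro add_mono card_image_le fin) auto
  finally show ?thesis unfolding occs_def .
qed

lemma sum_occs_le_occs_concat:
  assumes "x \<noteq> []" shows "(\<Sum>u\<leftarrow>us. occs x u) \<le> occs x (concat us)"
  using occs_append_ge[OF assms] by (induction us) (auto intro: order_trans add_left_mono)

lemma occs_concat_le:
  assumes "x \<noteq> []" shows "occs x (concat us) \<le> (\<Sum>u\<leftarrow>us. occs x u) + length x * length us"
proof (induction us)
  case Nil
  then show ?case using occs_le_length[OF assms, of "[]"] by simp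
next
  case (Cons u us)
  then show ?case using occs_append_le[of x u "concat us"] by simp
qed

lemma sum_occs_all_words:
  assumes "length x \<le> k"
  shows "(\<Sum>w\<leftarrow>all_words k. occs x w) = (k - length x + 1) * 2 ^ (k - length x)"
proof -
  let ?I = "{..<k - length x + 1}"
  let ?W = "{w :: bool list. length w = k}"
  have "occs x w = (\<Sum>i\<in>?I. of_bool (take (length x) (drop i w) = x))" if "w \<in> ?W" for w
  proof -
    have "{i. i + length x \<le> length w \<and> take (length x) (drop i w) = x} = ?I \<inter> {i. take (length x) (drop i w) = x}"
      using that assms by auto
    then show ?thesis
      unfolding occs_def by (simp only: sum_of_bool_eq finite_lessThan of_nat_id)
  qed
  then have "(\<Sum>w\<leftarrow>all_words k. occs x w) = (\<Sum>w\<in>?W. \<Sum>i\<in>?I. of_bool (take (length x) (drop i w) = x))"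
    by (simp add: sum_list_distinct_conv_sum_set distinct_all_words set_all_words)
  also have "\<dots> = (\<Sum>i\<in>?I. card (?W \<inter> {w. take (length x) (drop i w) = x}))"
    by (subst sum.swap) (simp add: finite_words_length)
  also have "\<dots> = (\<Sum>i\<in>?I. 2 ^ (k - length x))"
  proof (rule sum.cong[OF refl])
    fix i assume "i \<in> ?I"
    then have "i + length x \<le> k"
      using assms by auto
    then show "card (?W \<inter> {w. take (length x) (drop i w) = x}) = 2 ^ (k - length x)"
      by (simp add: Int_def card_words_with_factor_at)
  qed
  finally show ?thesis by simp
qed

definition deviation :: "bool list \<Rightarrow> bool list \<Rightarrow> real" where
  "deviation x u = \<bar>real (occs x u) - real (length u) / 2 ^ length x\<bar>"

lemma deviation_le_length:
  assumes "x \<noteq> []" shows "deviation x u \<le> length u"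
proof -
  have "0 \<le> real (length u) / 2 ^ length x" "real (length u) / 2 ^ length x \<le> length u"
    by (simp_all add: divide_le_eq mult_le_cancel_left1)
  moreover have "real (occs x u) \<le> length u"
    using occs_le_length[OF assms] by simp
  ultimately show ?thesis
    unfolding deviation_def abs_le_iff by linarith
qed

lemma deviation_append:
  assumes "x \<noteq> []"
  shows "deviation x (u @ v) \<le> deviation x u + deviation x v + length x"
proof -
  have "real (occs x u) + occs x v \<le> occs x (u @ v)" "real (occs x (u @ v)) \<le> occs x u + occs x v + length x"
    using occs_append_ge[OF assms, of u v] occs_append_le[of x u v] by linarith+
  moreover have "real (length (u @ v)) / 2 ^ length x = real (length u) / 2 ^ length x + real (length v) / 2 ^ length x"
    by (simp add: add_divide_distrib)
  ultimately show ?thesis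
    unfolding deviation_def by linarith
qed

lemma deviation_concat:
  fixes \<epsilon> :: real
  assumes "x \<noteq> []" and "\<And>u. u \<in> set us \<Longrightarrow> deviation x u + length x \<le> \<epsilon> * length u"
  shows "deviation x (concat us) \<le> \<epsilon> * length (concat us)"
  using assms(2)
proof (induction us)
  case Nil
  then show ?case using deviation_le_length[OF assms(1), of "[]"] by simp
next
  case (Cons u us)
  then have "deviation x (u @ concat us) \<le> \<epsilon> * length u + \<epsilon> * length (concat us)"
    using deviation_append[OF assms(1), of u "concat us"] by fastforce
  then show ?case by (simp add: distrib_left)
qed

lemma deviation_block:
  assumes "x \<noteq> []" shows "deviation x (block k) \<le> length x * 2 ^ k"
proof (cases "length x \<le> k")
  case True
  define t where "t = length x"
  define c where "c = real (occs x (block k))"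
  define p :: real where "p = 2 ^ (k - t)"
  have "real (k - t + 1) = real k - t + 1"
    using True by (simp add: t_def)
  then have cast: "real ((k - t + 1) * 2 ^ (k - t)) = (real k - t + 1) * p"
    unfolding p_def of_nat_mult of_nat_power of_nat_numeral by simp
  have "(k - t + 1) * 2 ^ (k - t) \<le> occs x (block k)"
    using sum_occs_le_occs_concat[OF assms, of "all_words k"] sum_occs_all_words[OF True]
    by (simp add: block_def t_def)
  then have lo: "(real k - t + 1) * p \<le> c"
    unfolding c_def cast[symmetric] by (simp only: of_nat_le_iff)
  have "occs x (block k) \<le> (k - t + 1) * 2 ^ (k - t) + t * 2 ^ k"
    using occs_concat_le[OF assms, of "all_words k"] sum_occs_all_words[OF True]
    by (simp add: block_def length_all_words t_def)
  then have "c \<le> real ((k - t + 1) * 2 ^ (k - t) + t * 2 ^ k)"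
    unfolding c_def by (simp only: of_nat_le_iff)
  then have "c \<le> real ((k - t + 1) * 2 ^ (k - t)) + t * 2 ^ k"
    by simp
  then have hi: "c \<le> (real k - t + 1) * p + t * 2 ^ k"
    unfolding cast .
  have mean: "real (length (block k)) / 2 ^ t = k * p"
    using True by (simp add: length_block p_def t_def power_diff)
  have "1 \<le> real t"
    using assms by (cases x) (simp_all add: t_def)
  then have "0 \<le> p" "p \<le> t * p" "t * p \<le> t * 2 ^ k"
    by (simp_all add: p_def mult_le_cancel_right1 mult_left_mono)
  then show ?thesis
    using lo hi unfolding deviation_def t_def[symmetric] c_def[symmetric] mean
    by (simp add: abs_le_iff algebra_simps)
next
  case False
  then have "real (length (block k)) \<le> length x * 2 ^ k"
    by (simp add: length_block)
  then show ?thesis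
    using deviation_le_length[OF assms, of "block k"] by linarith
qed

section \<open>Information-lossless transducers\<close>

lemma run_Cons_split:
  "run \<delta> \<nu> q (b # w) = (\<nu> q b @ fst (run \<delta> \<nu> (\<delta> q b) w), snd (run \<delta> \<nu> (\<delta> q b) w))"
  by (simp add: split_beta)

lemma run_append:
  "run \<delta> \<nu> q (u @ v) =
     (fst (run \<delta> \<nu> q u) @ fst (run \<delta> \<nu> (snd (run \<delta> \<nu> q u)) v), snd (run \<delta> \<nu> (snd (run \<delta> \<nu> q u)) v))"
  by (induction u arbitrary: q) (simp_all add: run_Cons_split del: run.simps(2))

lemma run_closed:
  assumes "\<forall>q\<in>Q. \<forall>b. \<delta> q b \<in> Q" "q \<in> Q"
  shows "snd (run \<delta> \<nu> q w) \<in> Q"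
  using assms(2) by (induction w arbitrary: q) (simp_all add: run_Cons_split assms(1) del: run.simps(2))

lemma card_shorter_words: "card {w :: bool list. length w < n} < 2 ^ n"
proof (induction n)
  case (Suc n)
  have "{w :: bool list. length w < Suc n} = {w. length w < n} \<union> {w. length w = n}"
    by auto
  then have "card {w :: bool list. length w < Suc n} \<le> card {w :: bool list. length w < n} + 2 ^ n"
    by (metis card_Un_le card_words_length)
  then show ?case
    using Suc by simp
qed simp

lemma finite_shorter_words: "finite {w :: bool list. length w < n}"
proof -
  have "{w :: bool list. length w < n} = (\<Union>i<n. {w. length w = i})"
    by auto
  then show ?thesis
    by (simp add: finite_words_length)
qed

locale ilfst =
  fixes Q q0 \<delta> \<nu>
  assumes ILFST: "ILFST (Q, q0, \<delta>, \<nu>)"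
begin

definition reachable :: "nat set" where
  "reachable = range (\<lambda>u. snd (run \<delta> \<nu> q0 u))"

lemma finite_states: "finite Q"
  using ILFST by (simp add: ILFST_def is_fst_def)

lemma reachable_subset: "reachable \<subseteq> Q"
  using ILFST run_closed[of Q \<delta> q0] by (auto simp: reachable_def ILFST_def is_fst_def)

lemma run_reachable:
  assumes "q \<in> reachable" shows "snd (run \<delta> \<nu> q w) \<in> reachable"
proof -
  obtain u where "q = snd (run \<delta> \<nu> q0 u)"
    using assms by (auto simp: reachable_def)
  then have "snd (run \<delta> \<nu> q w) = snd (run \<delta> \<nu> q0 (u @ w))"
    by (simp add: run_append)
  then show ?thesis
    by (simp add: reachable_def)
qed

lemma inj_run_reachable:
  assumes "q \<in> reachable" shows "inj (run \<delta> \<nu> q)"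
proof (rule injI)
  fix w w' assume e: "run \<delta> \<nu> q w = run \<delta> \<nu> q w'"
  obtain u where u: "q = snd (run \<delta> \<nu> q0 u)"
    using assms by (auto simp: reachable_def)
  have "run \<delta> \<nu> q0 (u @ w) = run \<delta> \<nu> q0 (u @ w')"
    unfolding run_append using e u by simp
  moreover have "inj (run \<delta> \<nu> q0)"
    using ILFST by (simp add: ILFST_def fst_out_def fst_state_def)
  ultimately show "w = w'"
    by (simp add: inj_eq)
qed

definition lossy :: "nat \<Rightarrow> nat \<Rightarrow> bool list set" where
  "lossy k d = {w. length w = k \<and> (\<exists>q\<in>reachable. length (fst (run \<delta> \<nu> q w)) + d < k)}"

lemma card_lossy_from:
  assumes "q \<in> reachable"
  shows "card {w :: bool list. length w = k \<and> length (fst (run \<delta> \<nu> q w)) + d < k} \<le> card Q * 2 ^ (k - d)"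
proof -
  let ?L = "{w :: bool list. length w = k \<and> length (fst (run \<delta> \<nu> q w)) + d < k}"
  let ?R = "{y :: bool list. length y < k - d} \<times> Q"
  have sub: "run \<delta> \<nu> q ` ?L \<subseteq> ?R"
  proof (rule image_subsetI)
    fix w assume "w \<in> ?L"
    moreover have "snd (run \<delta> \<nu> q w) \<in> Q"
      using run_reachable[OF assms] reachable_subset by blast
    ultimately show "run \<delta> \<nu> q w \<in> ?R"
      by (simp add: mem_Times_iff less_diff_conv)
  qed
  have inj: "inj_on (run \<delta> \<nu> q) ?L"
    by (rule inj_on_subset[OF inj_run_reachable[OF assms]]) simp
  have fin: "finite ?R"
    using finite_states finite_shorter_words by blast
  have "card ?L \<le> card ?R"
    by (rule card_inj_on_le[OF inj sub fin])
  also have "\<dots> \<le> 2 ^ (k - d) * card Q"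
    using card_shorter_words[of "k - d"] by (simp add: card_cartesian_product)
  finally show ?thesis
    by (simp add: mult.commute)
qed

lemma card_lossy: "card (lossy k d) \<le> card Q * card Q * 2 ^ (k - d)"
proof -
  have "lossy k d = (\<Union>q\<in>reachable. {w. length w = k \<and> length (fst (run \<delta> \<nu> q w)) + d < k})"
    by (auto simp: lossy_def)
  then have "card (lossy k d) \<le> (\<Sum>q\<in>reachable. card {w. length w = k \<and> length (fst (run \<delta> \<nu> q w)) + d < k})"
    by (simp add: card_UN_le finite_subset[OF reachable_subset finite_states])
  also have "\<dots> \<le> (\<Sum>q\<in>reachable. card Q * 2 ^ (k - d))"
    by (intro sum_mono card_lossy_from)
  also have "\<dots> = card reachable * (card Q * 2 ^ (k - d))"
    by simp
  also have "\<dots> \<le> card Q * (card Q * 2 ^ (k - d))"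
    by (intro mult_right_mono card_mono[OF finite_states reachable_subset]) simp
  finally show ?thesis
    by (simp add: mult.assoc)
qed

lemma length_run_concat_ge:
  assumes "q \<in> reachable" "\<forall>w\<in>set ws. length w = k"
  shows "(k - d) * length (filter (\<lambda>w. w \<notin> lossy k d) ws) \<le> length (fst (run \<delta> \<nu> q (concat ws)))"
  using assms
proof (induction ws arbitrary: q)
  case (Cons w ws)
  have "(k - d) * length (filter (\<lambda>w. w \<notin> lossy k d) ws)
      \<le> length (fst (run \<delta> \<nu> (snd (run \<delta> \<nu> q w)) (concat ws)))"
    using Cons.IH run_reachable Cons.prems by simp
  moreover have "w \<notin> lossy k d \<Longrightarrow> k - d \<le> length (fst (run \<delta> \<nu> q w))"
    using Cons.prems unfolding lossy_def by auto
  ultimately show ?case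
    by (auto simp: run_append)
qed simp

text \<open>Only a fraction \<open>|Q|\<^sup>2 2\<^sup>-\<^sup>d\<close> of the words of length \<open>k\<close> can be
  compressed by \<open>d\<close> bits, so on \<open>block k\<close> the output loses at most about \<open>d/k + |Q|\<^sup>2 2\<^sup>-\<^sup>d\<close>.\<close>

lemma length_run_block:
  assumes "q \<in> reachable" "8 * d \<le> k" "8 * (card Q * card Q) \<le> 2 ^ d"
  shows "3 * length (block k) \<le> 4 * length (fst (run \<delta> \<nu> q (block k)))"
proof -
  let ?good = "filter (\<lambda>w. w \<notin> lossy k d) (all_words k)"
  have "length (filter (\<lambda>w. w \<in> lossy k d) (all_words k)) = card ({w. w \<in> lossy k d} \<inter> set (all_words k))"
    by (rule distinct_length_filter[OF distinct_all_words])
  also have "{w. w \<in> lossy k d} \<inter> set (all_words k) = lossy k d"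
    by (auto simp: set_all_words lossy_def)
  also have "card (lossy k d) \<le> card Q * card Q * 2 ^ (k - d)"
    by (rule card_lossy)
  finally have "8 * length (filter (\<lambda>w. w \<in> lossy k d) (all_words k)) \<le> 8 * (card Q * card Q) * 2 ^ (k - d)"
    by simp
  also have "\<dots> \<le> 2 ^ d * 2 ^ (k - d)"
    using assms(3) by (rule mult_le_mono1)
  also have "\<dots> = 2 ^ k"
    using assms(2) by (simp flip: power_add)
  finally have "7 * 2 ^ k \<le> 8 * length ?good"
    using sum_length_filter_compl[of "\<lambda>w. w \<in> lossy k d" "all_words k"] by (simp add: length_all_words)
  moreover have "7 * k \<le> 8 * (k - d)"
    using assms(2) by simp
  ultimately have "49 * (k * 2 ^ k) \<le> 64 * ((k - d) * length ?good)"
    using mult_le_mono[of "7 * k" "8 * (k - d)" "7 * 2 ^ k" "8 * length ?good"] by (simp add: algebra_simps)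
  also have "(k - d) * length ?good \<le> length (fst (run \<delta> \<nu> q (block k)))"
    unfolding block_def using assms(1) by (intro length_run_concat_ge) (simp_all add: set_all_words)
  finally show ?thesis
    by (simp add: length_block)
qed

lemma length_run_blocks:
  obtains k0 where "\<And>ks q. \<forall>k\<in>set ks. k0 \<le> k \<Longrightarrow> q \<in> reachable \<Longrightarrow>
    3 * length (concat (map block ks)) \<le> 4 * length (fst (run \<delta> \<nu> q (concat (map block ks))))"
proof -
  define d where "d = 8 * (card Q * card Q)"
  have d: "8 * (card Q * card Q) \<le> 2 ^ d"
    unfolding d_def by (simp add: less_imp_le_nat)
  have "3 * length (concat (map block ks)) \<le> 4 * length (fst (run \<delta> \<nu> q (concat (map block ks))))"
    if "\<forall>k\<in>set ks. 8 * d \<le> k" "q \<in> reachable" for ks q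
    using that
  proof (induction ks arbitrary: q)
    case (Cons k ks)
    have "3 * length (block k) \<le> 4 * length (fst (run \<delta> \<nu> q (block k)))"
      using Cons.prems d by (intro length_run_block) auto
    moreover have "3 * length (concat (map block ks))
        \<le> 4 * length (fst (run \<delta> \<nu> (snd (run \<delta> \<nu> q (block k))) (concat (map block ks))))"
      using Cons.IH run_reachable Cons.prems by simp
    ultimately show ?case
      by (simp add: run_append)
  qed simp
  then show ?thesis
    by (rule that)
qed

end

section \<open>LZ78 and factor complexity\<close>

declare bin.simps [simp del]

lemma length_bin: "length (bin n) = floorlog 2 n"
proof (induction n rule: bin.induct)
  case (1 n)
  then show ?case
    by (subst bin.simps, subst compute_floorlog) simp
qed

lemma floorlog_le_self: "floorlog 2 n \<le> n"
  by (simp add: floorlog_le_iff)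

lemma floorlog_le_log:
  assumes "1 \<le> n" shows "real (floorlog 2 n) \<le> log 2 n + 1"
  using assms by (simp add: floorlog_def)

lemma length_code_idx: "length (code_idx j) \<le> 3 * floorlog 2 j + 2"
proof -
  have "length (concat (map (\<lambda>b. [b, b]) xs)) = 2 * length xs" for xs :: "bool list"
    by (induction xs) auto
  then have "length (code_idx j) = 2 * floorlog 2 (floorlog 2 j) + 2 + floorlog 2 j"
    by (simp add: code_idx_def self_delim_def length_bin)
  then show ?thesis
    using floorlog_le_self[of "floorlog 2 j"] by simp
qed

fun lz_phrases :: "bool list list \<Rightarrow> bool list \<Rightarrow> bool list \<Rightarrow> bool list list" where
  "lz_phrases D cur [] = (if cur = [] then [] else [cur])"
| "lz_phrases D cur (b # w) =
     (if cur @ [b] \<in> set D then lz_phrases D (cur @ [b]) w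
      else (cur @ [b]) # lz_phrases (D @ [cur @ [b]]) [] w)"

lemma length_lz_aux: "length (lz_aux D cur w) = length (lz_phrases D cur w)"
  by (induction D cur w rule: lz_phrases.induct) auto

lemma concat_lz_phrases: "concat (lz_phrases D cur w) = cur @ w"
  by (induction D cur w rule: lz_phrases.induct) auto

lemma lz_phrases_nonempty: "p \<in> set (lz_phrases D cur w) \<Longrightarrow> p \<noteq> []"
  by (induction D cur w rule: lz_phrases.induct) (auto split: if_splits)

lemma distinct_butlast_lz_phrases:
  "distinct (butlast (lz_phrases D cur w)) \<and> set (butlast (lz_phrases D cur w)) \<inter> set D = {}"
proof (induction D cur w rule: lz_phrases.induct)
  case (2 D cur b w)
  let ?r = "lz_phrases (D @ [cur @ [b]]) [] w"
  have "butlast ((cur @ [b]) # ?r) = (if ?r = [] then [] else (cur @ [b]) # butlast ?r)"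
    by simp
  then show ?case
    using 2 by auto
qed simp

lemma idx_less: "p \<in> set D \<Longrightarrow> idx D p < length D"
  unfolding idx_def by (metis (mono_tags, lifting) LeastI in_set_conv_nth)

lemma lz_aux_idx_less:
  assumes "[] \<in> set D" "cur \<in> set D" "cur \<noteq> [] \<Longrightarrow> butlast cur \<in> set D"
  shows "(l, b) \<in> set (lz_aux D cur w) \<Longrightarrow> l < length D + length (lz_aux D cur w)"
  using assms
proof (induction D cur w arbitrary: l b rule: lz_aux.induct)
  case (1 D cur)
  then show ?case
    using idx_less[of "butlast cur" D] by (auto split: if_splits)
next
  case (2 D cur b' w)
  then show ?case
    using idx_less[of cur D] by (auto split: if_splits)
qed

lemma length_le_length_concat:
  "(\<And>p. p \<in> set ps \<Longrightarrow> p \<noteq> []) \<Longrightarrow> length ps \<le> length (concat ps)"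
proof (induction ps)
  case (Cons p ps)
  then have "p \<noteq> []"
    by simp
  then show ?case
    using Cons by (cases p) auto
qed simp

lemma length_LZ_le:
  "length (LZ x) \<le> length (lz_phrases [[]] [] x) * (3 * floorlog 2 (length x) + 3)"
proof -
  let ?ps = "lz_aux [[]] [] x"
  have "length (lz_phrases [[]] [] x) \<le> length (concat (lz_phrases [[]] [] x))"
    by (rule length_le_length_concat) (rule lz_phrases_nonempty)
  then have len: "length ?ps \<le> length x"
    by (simp add: length_lz_aux concat_lz_phrases)
  have "length (code_idx l @ [b]) \<le> 3 * floorlog 2 (length x) + 3" if "(l, b) \<in> set ?ps" for l b
  proof -
    have "l \<le> length x"
      using lz_aux_idx_less[of "[[]]" "[]" l b x] that len by simp
    then show ?thesis
      using length_code_idx[of l] floorlog_mono[of l "length x" 2] by simp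
  qed
  then have "length (LZ x) \<le> (\<Sum>p\<leftarrow>?ps. 3 * floorlog 2 (length x) + 3)"
    unfolding LZ_def length_concat map_map by (intro sum_list_mono) (auto split: prod.splits)
  also have "\<dots> = length ?ps * (3 * floorlog 2 (length x) + 3)"
    by (simp add: sum_list_triv)
  finally show ?thesis
    by (simp add: length_lz_aux)
qed

definition factors :: "nat \<Rightarrow> bool list \<Rightarrow> bool list set" where
  "factors t x = (\<lambda>i. take t (drop i x)) ` {i. i + t \<le> length x}"

lemma finite_factors: "finite (factors t x)"
  unfolding factors_def by (rule finite_imageI, rule finite_subset[of _ "{..length x}"]) auto

lemma factors_take: "factors t (take n x) \<subseteq> factors t x"
proof
  fix y assume "y \<in> factors t (take n x)"
  then obtain i where i: "i + t \<le> length (take n x)" and y: "y = take t (drop i (take n x))"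
    unfolding factors_def by auto
  moreover have "t \<le> n - i"
    using i by (simp; linarith)
  ultimately have "y = take t (drop i x)"
    by (simp add: drop_take)
  with i show "y \<in> factors t x"
    unfolding factors_def by auto
qed

lemma card_factors_append: "card (factors t (u @ v)) \<le> card (factors t u) + card (factors t v) + t"
proof -
  let ?at = "\<lambda>i. take t (drop i (u @ v))"
  have "factors t (u @ v) \<subseteq> factors t u \<union> factors t v \<union> ?at ` {length u - t..<length u}"
  proof
    fix y assume "y \<in> factors t (u @ v)"
    then obtain i where i: "i + t \<le> length (u @ v)" and y: "y = ?at i"
      unfolding factors_def by auto
    consider "i + t \<le> length u" | "length u \<le> i" | "length u - t \<le> i" "i < length u"
      by linarith
    then show "y \<in> factors t u \<union> factors t v \<union> ?at ` {length u - t..<length u}"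
    proof cases
      case 1
      then have "y = take t (drop i u)"
        using y by simp
      with 1 show ?thesis
        unfolding factors_def by blast
    next
      case 2
      then have "y = take t (drop (i - length u) v)" and "i - length u + t \<le> length v"
        using i y by auto
      then show ?thesis
        unfolding factors_def by blast
    next
      case 3
      then have "i \<in> {length u - t..<length u}"
        by simp
      with y show ?thesis
        by blast
    qed
  qed
  then have "card (factors t (u @ v)) \<le> card (factors t u \<union> factors t v \<union> ?at ` {length u - t..<length u})"
    by (intro card_mono) (simp_all add: finite_factors)
  also have "\<dots> \<le> card (factors t u) + card (factors t v) + card (?at ` {length u - t..<length u})"
    by (meson add_le_mono card_Un_le le_refl order_trans)
  also have "\<dots> \<le> card (factors t u) + card (factors t v) + t"
    using card_image_le[of "{length u - t..<length u}" ?at] by simp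
  finally show ?thesis .
qed

lemma nth_concat_replicate:
  "i < r * length B \<Longrightarrow> concat (replicate r B) ! i = B ! (i mod length B)"
proof (induction r arbitrary: i)
  case (Suc r)
  show ?case
  proof (cases "i < length B")
    case False
    then have "concat (replicate (Suc r) B) ! i = B ! ((i - length B) mod length B)"
      using Suc by (simp add: nth_append)
    with False show ?thesis
      by (simp add: le_mod_geq)
  qed (simp add: nth_append)
qed simp

lemma card_factors_concat_replicate:
  assumes "B \<noteq> []"
  shows "card (factors t (concat (replicate r B))) \<le> length B"
proof -
  let ?X = "concat (replicate r B)"
  let ?at = "\<lambda>i. take t (drop i ?X)"
  have len: "length ?X = r * length B"
    by (simp add: length_concat sum_list_replicate)
  have "?at i = ?at (i mod length B)" if "i + t \<le> length ?X" for i
  proof (rule nth_equalityI)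
    have "t \<le> length ?X - i" "t \<le> length ?X - i mod length B"
      using that mod_less_eq_dividend[of i "length B"] by linarith+
    then show "length (?at i) = length (?at (i mod length B))"
      by (simp add: min_absorb2)
    fix m assume "m < length (?at i)"
    then have "m < t"
      by simp
    then have "i + m < r * length B" "i mod length B + m < r * length B"
      using that len mod_less_eq_dividend[of i "length B"] by linarith+
    with \<open>m < t\<close> show "?at i ! m = ?at (i mod length B) ! m"
      by (simp add: len nth_concat_replicate mod_add_right_eq add.commute)
  qed
  then have "factors t ?X \<subseteq> ?at ` {..<length B}"
    using assms unfolding factors_def by auto
  then have "card (factors t ?X) \<le> card (?at ` {..<length B})"
    by (rule card_mono[rotated]) simp
  also have "\<dots> \<le> length B"
    using card_image_le[of "{..<length B}" ?at] by simp
  finally show ?thesis .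
qed

lemma in_factors_concat:
  assumes "p \<in> set ps" shows "p \<in> factors (length p) (concat ps)"
proof -
  obtain as bs where ps: "ps = as @ p # bs"
    using assms by (meson split_list)
  then have "p = take (length p) (drop (length (concat as)) (concat ps))"
    and "length (concat as) + length p \<le> length (concat ps)"
    by simp_all
  then show ?thesis
    unfolding factors_def by blast
qed

lemma length_distinct_factors_le:
  assumes "distinct qs" and "\<And>p. p \<in> set qs \<Longrightarrow> p \<noteq> [] \<and> p \<in> factors (length p) x"
  shows "length (filter (\<lambda>p. length p \<le> T) qs) \<le> (\<Sum>t\<in>{1..T}. card (factors t x))"
proof -
  have "set (filter (\<lambda>p. length p \<le> T) qs) \<subseteq> (\<Union>t\<in>{1..T}. factors t x)"
  proof
    fix p assume "p \<in> set (filter (\<lambda>p. length p \<le> T) qs)"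
    then have "length p \<in> {1..T}" "p \<in> factors (length p) x"
      using assms(2) by (auto simp: Suc_le_eq)
    then show "p \<in> (\<Union>t\<in>{1..T}. factors t x)"
      by blast
  qed
  then have "card (set (filter (\<lambda>p. length p \<le> T) qs)) \<le> card (\<Union>t\<in>{1..T}. factors t x)"
    by (rule card_mono[rotated]) (simp add: finite_factors)
  also have "\<dots> \<le> (\<Sum>t\<in>{1..T}. card (factors t x))"
    by (rule card_UN_le) simp
  finally show ?thesis
    by (simp only: distinct_card[OF distinct_filter[OF assms(1)]])
qed

lemma length_long_words_le:
  "(T + 1) * length (filter (\<lambda>p. T < length p) ps) \<le> length (concat ps)"
  by (induction ps) auto

text \<open>A parsing into distinct nonempty phrases has few short phrases when the word has few factors,
  and few long phrases because they use up the word.\<close>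

lemma length_distinct_parsing_le:
  assumes "\<And>p. p \<in> set ps \<Longrightarrow> p \<noteq> []" and "distinct (butlast ps)"
  shows "real (length ps) \<le> 1 + real (\<Sum>t\<in>{1..T}. card (factors t (concat ps))) + length (concat ps) / (real T + 1)"
proof -
  let ?qs = "butlast ps"
  have "length (filter (\<lambda>p. length p \<le> T) ?qs) \<le> (\<Sum>t\<in>{1..T}. card (factors t (concat ps)))"
    using assms in_factors_concat by (intro length_distinct_factors_le) (auto dest: in_set_butlastD)
  then have "real (length (filter (\<lambda>p. length p \<le> T) ?qs)) \<le> real (\<Sum>t\<in>{1..T}. card (factors t (concat ps)))"
    by (simp only: of_nat_le_iff)
  moreover have "length (concat ?qs) \<le> length (concat ps)"
    by (cases ps rule: rev_cases) auto
  then have "(T + 1) * length (filter (\<lambda>p. T < length p) ?qs) \<le> length (concat ps)"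
    using length_long_words_le[of T ?qs] by linarith
  then have "real (length (filter (\<lambda>p. T < length p) ?qs)) \<le> length (concat ps) / (real T + 1)"
    by (simp add: field_simps flip: of_nat_mult)
  moreover have "length ps \<le> length (filter (\<lambda>p. length p \<le> T) ?qs) + length (filter (\<lambda>p. T < length p) ?qs) + 1"
    using sum_length_filter_compl[of "\<lambda>p. length p \<le> T" ?qs] by (simp add: not_le)
  then have "real (length ps) \<le> real (length (filter (\<lambda>p. length p \<le> T) ?qs)) + real (length (filter (\<lambda>p. T < length p) ?qs)) + 1"
    by simp
  ultimately show ?thesis
    by linarith
qed

lemma length_LZ_le_factors:
  "real (length (LZ x))
     \<le> (3 * floorlog 2 (length x) + 3) * (1 + real (\<Sum>t\<in>{1..T}. card (factors t x)) + length x / (real T + 1))"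
proof -
  let ?ps = "lz_phrases [[]] [] x"
  have "real (length ?ps) \<le> 1 + real (\<Sum>t\<in>{1..T}. card (factors t x)) + length x / (real T + 1)"
    using length_distinct_parsing_le[of ?ps T] lz_phrases_nonempty distinct_butlast_lz_phrases
    by (simp add: concat_lz_phrases)
  then have "(3 * floorlog 2 (length x) + 3) * real (length ?ps)
      \<le> (3 * floorlog 2 (length x) + 3) * (1 + real (\<Sum>t\<in>{1..T}. card (factors t x)) + length x / (real T + 1))"
    by (rule mult_left_mono) simp
  moreover have "real (length (LZ x)) \<le> (3 * floorlog 2 (length x) + 3) * real (length ?ps)"
    using length_LZ_le[of x] by (metis mult.commute of_nat_le_iff of_nat_mult)
  ultimately show ?thesis
    by linarith
qed

lemma phrase_cost_le:
  fixes g G s n :: real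
  assumes "3 \<le> g" "g \<le> G" "0 \<le> s" "0 \<le> n"
  shows "g * (1 + 8 * g * ((8 * g + 3) * s) + n / (8 * g + 1)) \<le> G + 8 * G ^ 2 * (8 * G + 3) * s + n / 8"
proof -
  have "g ^ 2 * (8 * g + 3) \<le> G ^ 2 * (8 * G + 3)"
    using assms by (intro mult_mono power_mono) auto
  then have "8 * (g ^ 2 * (8 * g + 3) * s) \<le> 8 * (G ^ 2 * (8 * G + 3) * s)"
    using assms(3) by (intro mult_left_mono mult_right_mono) auto
  then have "8 * g ^ 2 * (8 * g + 3) * s \<le> 8 * G ^ 2 * (8 * G + 3) * s"
    by (simp only: mult.assoc)
  moreover have "g * n / (8 * g + 1) \<le> n / 8"
    using assms by (simp add: field_simps mult_right_mono)
  moreover have "g * (1 + 8 * g * ((8 * g + 3) * s) + n / (8 * g + 1))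
      = g + 8 * g ^ 2 * (8 * g + 3) * s + g * n / (8 * g + 1)"
    by (simp add: algebra_simps power2_eq_square)
  ultimately show ?thesis
    using assms(2) by linarith
qed

text \<open>With phrases of length up to \<open>T = 8g\<close>, where \<open>g \<approx> 3 log n\<close> bounds the cost of one phrase,
  long phrases cost at most \<open>n/8\<close> and short ones \<open>O(log\<^sup>3 n \<sqrt>n)\<close>.\<close>

lemma eventually_length_LZ_le:
  assumes "\<forall>\<^sub>F n in sequentially. \<forall>t. real (card (factors t (prefix S n))) \<le> (real t + 3) * sqrt n"
  shows "\<forall>\<^sub>F n in sequentially. real (length (LZ (prefix S n))) \<le> n / 4"
proof -
  define G where "G = (\<lambda>n::nat. 3 * log 2 n + 6)"
  have "\<forall>\<^sub>F n in sequentially. G n + 8 * G n ^ 2 * (8 * G n + 3) * sqrt n \<le> n / 8"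
    unfolding G_def by real_asymp
  with assms eventually_ge_at_top[of 1]
  show ?thesis
  proof eventually_elim
    case (elim n)
    define x where "x = prefix S n"
    define g where "g = 3 * floorlog 2 n + 3"
    define T where "T = 8 * g"
    have lx: "length x = n"
      by (simp add: x_def prefix_def)
    have "real (card (factors t x)) \<le> (real T + 3) * sqrt n" if "t \<in> {1..T}" for t
    proof -
      have "real (card (factors t x)) \<le> (real t + 3) * sqrt n"
        using elim(1) by (simp add: x_def)
      also have "\<dots> \<le> (real T + 3) * sqrt n"
        using that by (intro mult_right_mono) auto
      finally show ?thesis .
    qed
    then have "(\<Sum>t\<in>{1..T}. real (card (factors t x))) \<le> (\<Sum>t\<in>{1..T}. (real T + 3) * sqrt n)"
      by (rule sum_mono)
    then have short: "real (\<Sum>t\<in>{1..T}. card (factors t x)) \<le> T * ((T + 3) * sqrt n)"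
      by simp
    have g: "3 \<le> real g" "real g \<le> G n"
      using floorlog_le_log[OF elim(2)] by (simp_all add: g_def G_def)
    have "real (length (LZ x)) \<le> g * (1 + real (\<Sum>t\<in>{1..T}. card (factors t x)) + n / (real T + 1))"
      using length_LZ_le_factors[of x T] by (simp add: lx g_def)
    also have "\<dots> \<le> g * (1 + T * ((T + 3) * sqrt n) + n / (real T + 1))"
      using short by (intro mult_left_mono) auto
    also have "\<dots> \<le> G n + 8 * G n ^ 2 * (8 * G n + 3) * sqrt n + n / 8"
      using phrase_cost_le[OF g, of "sqrt n" n] by (simp add: T_def)
    also have "\<dots> \<le> n / 4"
      using elim(3) by simp
    finally show ?case
      by (simp add: x_def)
  qed
qed

lemma normalI_deviation:
  assumes "\<And>x (\<epsilon> :: real). x \<noteq> [] \<Longrightarrow> 0 < \<epsilon> \<Longrightarrow> \<forall>\<^sub>F n in sequentially. deviation x (prefix S n) \<le> \<epsilon> * n"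
  shows "normal S"
  unfolding normal_def
proof
  fix x :: "bool list"
  show "(\<lambda>n. real (occ S x n) / n) \<longlonglongrightarrow> 1 / 2 ^ length x"
  proof (cases "x = []")
    case True
    have "(\<lambda>n. real (n + 1) / n) \<longlonglongrightarrow> 1"
      by real_asymp
    then show ?thesis
      using True by (simp add: occ_eq_occs_prefix occs_Nil prefix_def)
  next
    case False
    show ?thesis
    proof (rule tendstoI)
      fix \<epsilon> :: real assume "0 < \<epsilon>"
      then have "\<forall>\<^sub>F n in sequentially. deviation x (prefix S n) \<le> \<epsilon> / 2 * n"
        by (intro assms False) simp
      with eventually_ge_at_top[of 1]
      show "\<forall>\<^sub>F n in sequentially. dist (real (occ S x n) / n) (1 / 2 ^ length x) < \<epsilon>"
      proof eventually_elim
        case (elim n)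
        have "real (occ S x n) / n - 1 / 2 ^ length x = (real (occs x (prefix S n)) - n / 2 ^ length x) / n"
          using elim(1) by (simp add: occ_eq_occs_prefix field_simps)
        then have "dist (real (occ S x n) / n) (1 / 2 ^ length x) = deviation x (prefix S n) / n"
          by (simp add: dist_real_def deviation_def prefix_def)
        also have "\<dots> \<le> \<epsilon> / 2"
          using elim by (simp add: divide_le_eq)
        finally show ?case
          using \<open>0 < \<epsilon>\<close> by linarith
      qed
    qed
  qed
qed

section \<open>The sequence\<close>

definition period :: "nat \<Rightarrow> nat" where
  "period j = 2 ^ j * 2 ^ 2 ^ j"

text \<open>Stage \<open>j\<close> repeats \<open>block (2\<^sup>j)\<close> so often that its period is at most the square root of
  every position inside it; this keeps the factor complexity of all prefixes small.\<close>

definition stage :: "nat \<Rightarrow> bool list" where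
  "stage j = concat (replicate (period (Suc j) ^ 2) (block (2 ^ j)))"

definition stages :: "nat \<Rightarrow> bool list" where
  "stages J = concat (map stage [0..<J])"

definition deep_seq :: "nat \<Rightarrow> bool" where
  "deep_seq i = stages (Suc i) ! i"

lemma length_block_pow: "length (block (2 ^ j)) = period j"
  by (simp add: length_block period_def)

lemma period_pos: "0 < period j"
  by (simp add: period_def)

lemma Suc_le_period: "Suc j \<le> period j"
proof -
  have "Suc j \<le> 2 ^ j"
    by (induction j) auto
  also have "\<dots> \<le> period j"
    by (simp add: period_def)
  finally show ?thesis .
qed

lemma sum_period_le: "(\<Sum>i<Suc j. period i) \<le> 2 * period j"
proof (induction j)
  case (Suc j)
  have "2 * period j \<le> period (Suc j)"
    by (simp add: period_def)
  with Suc show ?case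
    by simp
qed (simp add: period_def)

lemma length_stage: "length (stage j) = period (Suc j) ^ 2 * period j"
  by (simp add: stage_def length_concat sum_list_replicate length_block_pow)

lemma stages_Suc: "stages (Suc J) = stages J @ stage J"
  by (simp add: stages_def)

lemma stages_append:
  assumes "J \<le> J'" shows "stages J' = stages J @ concat (map stage [J..<J'])"
proof -
  have "[0..<J'] = [0..<J] @ [J..<J']"
    using assms upt_add_eq_append[of 0 J "J' - J"] by simp
  then show ?thesis
    by (simp add: stages_def)
qed

lemma length_stages_mono: "J \<le> J' \<Longrightarrow> length (stages J) \<le> length (stages J')"
  by (simp add: stages_append)

lemma period_sq_le_length_stage: "period (Suc j) ^ 2 \<le> length (stage j)"
  using period_pos[of j] by (simp add: length_stage)

lemma le_length_stages: "J \<le> length (stages J)"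
proof (induction J)
  case (Suc J)
  have "1 \<le> period (Suc J) ^ 2"
    using period_pos[of "Suc J"] by (simp add: Suc_le_eq)
  with Suc period_sq_le_length_stage[of J] show ?case
    by (simp add: stages_Suc)
qed simp

lemma period_le_sqrt:
  assumes "0 < J" "length (stages J) \<le> n"
  shows "real (period J) \<le> sqrt n"
proof -
  obtain J' where "J = Suc J'"
    using assms(1) by (cases J) auto
  then have "period J ^ 2 \<le> n"
    using assms(2) period_sq_le_length_stage[of J'] by (simp add: stages_Suc)
  then show ?thesis
    by (simp add: real_le_rsqrt flip: of_nat_power)
qed

lemma prefix_deep_seq:
  assumes "n \<le> length (stages J)" shows "prefix deep_seq n = take n (stages J)"
proof -
  have "deep_seq i = stages J ! i" if "i < n" for i
  proof -
    let ?M = "max J (Suc i)"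
    have "i < length (stages (Suc i))"
      using le_length_stages[of "Suc i"] by simp
    then have "deep_seq i = stages ?M ! i"
      by (simp add: deep_seq_def stages_append[of "Suc i" ?M] nth_append)
    also have "\<dots> = stages J ! i"
      using that assms by (simp add: stages_append[of J ?M] nth_append)
    finally show ?thesis .
  qed
  then show ?thesis
    using assms by (intro nth_equalityI) (auto simp: prefix_def)
qed

lemma stage_containing:
  obtains J where "length (stages J) \<le> n" "n < length (stages (Suc J))"
proof -
  define J where "J = (LEAST J. n < length (stages (Suc J)))"
  have "n < length (stages (Suc n))"
    using le_length_stages[of "Suc n"] by simp
  then have "n < length (stages (Suc J))"
    unfolding J_def by (rule LeastI)
  moreover have "length (stages J) \<le> n"
  proof (cases J)
    case (Suc J')
    then show ?thesis
      using not_less_Least[of J' "\<lambda>J. n < length (stages (Suc J))"] J_def by simp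
  qed (simp add: stages_def)
  ultimately show ?thesis
    using that by blast
qed

lemma take_concat_replicate:
  assumes "q < r" "s \<le> length B"
  shows "take (q * length B + s) (concat (replicate r B)) = concat (replicate q B) @ take s B"
proof -
  have "r = q + Suc (r - q - 1)"
    using assms(1) by simp
  then have "replicate r B = replicate q B @ B # replicate (r - q - 1) B"
    by (metis replicate_Suc replicate_add)
  moreover have "length (concat (replicate q B)) = q * length B"
    by (simp add: length_concat sum_list_replicate)
  ultimately show ?thesis
    using assms(2) by simp
qed

lemma concat_map_stage:
  "concat (map stage js) = concat (map block (concat (map (\<lambda>j. replicate (period (Suc j) ^ 2) (2 ^ j)) js)))"
  by (induction js) (simp_all add: stage_def)

lemma prefix_deep_seq_decomp:
  assumes "1 \<le> K" "length (stages K) \<le> n"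
  obtains ks z where "prefix deep_seq n = stages K @ concat (map block ks) @ z"
    "\<forall>k\<in>set ks. 2 ^ K \<le> k" "real (length z) \<le> sqrt n"
proof -
  obtain J where J: "length (stages J) \<le> n" "n < length (stages (Suc J))"
    using stage_containing by blast
  have "K \<le> J"
    using J(2) assms(2) length_stages_mono[of "Suc J" K] by linarith
  define p where "p = period J"
  define d where "d = n - length (stages J)"
  define q where "q = d div p"
  define s where "s = d mod p"
  have "0 < p"
    by (simp add: p_def period_pos)
  then have d: "d = q * p + s" "s < p"
    by (simp_all add: q_def s_def)
  have "d < period (Suc J) ^ 2 * p"
    using J by (simp add: d_def p_def stages_Suc length_stage)
  then have "q < period (Suc J) ^ 2"
    using \<open>0 < p\<close> by (simp add: q_def less_mult_imp_div_less)
  then have "take d (stage J) = concat (replicate q (block (2 ^ J))) @ take s (block (2 ^ J))"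
    using d unfolding stage_def p_def by (metis length_block_pow less_imp_le_nat take_concat_replicate)
  then have "prefix deep_seq n = stages J @ concat (replicate q (block (2 ^ J))) @ take s (block (2 ^ J))"
    using J by (simp add: prefix_deep_seq[of n "Suc J"] stages_Suc d_def)
  also have "stages J = stages K @ concat (map block (concat (map (\<lambda>j. replicate (period (Suc j) ^ 2) (2 ^ j)) [K..<J])))"
    using \<open>K \<le> J\<close> by (simp add: stages_append concat_map_stage)
  finally have "prefix deep_seq n = stages K @ concat (map block
      (concat (map (\<lambda>j. replicate (period (Suc j) ^ 2) (2 ^ j)) [K..<J]) @ replicate q (2 ^ J))) @ take s (block (2 ^ J))"
    by simp
  moreover have "\<forall>k\<in>set (concat (map (\<lambda>j. replicate (period (Suc j) ^ 2) (2 ^ j)) [K..<J]) @ replicate q (2 ^ J)).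
      (2::nat) ^ K \<le> k"
    using \<open>K \<le> J\<close> by auto
  moreover have "real (length (take s (block (2 ^ J)))) \<le> sqrt n"
  proof -
    have "real p \<le> sqrt n"
      using period_le_sqrt[of J n] J(1) \<open>K \<le> J\<close> assms(1) by (simp add: p_def)
    then show ?thesis
      using d(2) by simp
  qed
  ultimately show ?thesis
    using that by blast
qed

lemma card_factors_stages: "card (factors t (stages J)) \<le> 1 + (\<Sum>j<J. period j + t)"
proof (induction J)
  case 0
  have "factors t (stages 0) \<subseteq> {[]}"
    by (auto simp: factors_def stages_def)
  then have "card (factors t (stages 0)) \<le> card {[] :: bool list}"
    by (rule card_mono[rotated]) simp
  then show ?case
    by simp
next
  case (Suc J)
  have "block (2 ^ J) \<noteq> []"
    using length_block_pow[of J] period_pos[of J] by auto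
  then have "card (factors t (stage J)) \<le> period J"
    using card_factors_concat_replicate[of "block (2 ^ J)" t] by (simp add: stage_def length_block_pow)
  then show ?case
    using Suc card_factors_append[of t "stages J" "stage J"] by (simp add: stages_Suc)
qed

lemma card_factors_prefix_deep_seq:
  assumes "length (stages 1) \<le> n"
  shows "real (card (factors t (prefix deep_seq n))) \<le> (real t + 3) * sqrt n"
proof -
  obtain J where J: "length (stages J) \<le> n" "n < length (stages (Suc J))"
    using stage_containing by blast
  have "0 < J"
    using J(2) assms by (cases J) auto
  have "prefix deep_seq n = take n (stages (Suc J))"
    using J(2) by (simp add: prefix_deep_seq)
  then have "card (factors t (prefix deep_seq n)) \<le> card (factors t (stages (Suc J)))"
    by (simp add: card_mono[OF finite_factors factors_take])
  also have "\<dots> \<le> 1 + (\<Sum>j<Suc J. period j) + Suc J * t"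
    using card_factors_stages[of t "Suc J"] by (simp add: sum.distrib)
  also have "\<dots> \<le> (t + 3) * period J"
    using sum_period_le[of J] Suc_le_period[of J] period_pos[of J] mult_le_mono1[of "Suc J" "period J" t]
    by (simp add: algebra_simps)
  finally have "real (card (factors t (prefix deep_seq n))) \<le> (real t + 3) * period J"
    by (metis of_nat_add of_nat_le_iff of_nat_mult of_nat_numeral)
  also have "\<dots> \<le> (real t + 3) * sqrt n"
    using period_le_sqrt[OF \<open>0 < J\<close> J(1)] by (simp add: mult_left_mono)
  finally show ?thesis .
qed

lemma LZ_prefix_deep_seq: "\<forall>\<^sub>F n in sequentially. real (length (LZ (prefix deep_seq n))) \<le> n / 4"
proof (rule eventually_length_LZ_le)
  show "\<forall>\<^sub>F n in sequentially. \<forall>t. real (card (factors t (prefix deep_seq n))) \<le> (real t + 3) * sqrt n"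
    using eventually_ge_at_top[of "length (stages 1)"]
    by eventually_elim (simp add: card_factors_prefix_deep_seq)
qed

lemma deviation_concat_blocks:
  fixes k0 :: nat
  assumes "x \<noteq> []" "\<forall>k\<in>set ks. k0 \<le> k" "0 < k0"
  shows "deviation x (concat (map block ks)) \<le> 2 * length x / k0 * length (concat (map block ks))"
proof (rule deviation_concat[OF assms(1)])
  fix u assume "u \<in> set (map block ks)"
  then obtain k where k: "u = block k" "k0 \<le> k"
    using assms(2) by auto
  have "real (length x) \<le> length x * 2 ^ k"
    using mult_left_mono[of 1 "2 ^ k" "real (length x)"] by simp
  then have "deviation x u + length x \<le> 2 * length x * 2 ^ k"
    using deviation_block[OF assms(1), of k] k(1) by simp
  also have "\<dots> = 2 * length x / k * length u"
    using k assms(3) by (simp add: length_block)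
  also have "\<dots> \<le> 2 * length x / k0 * length u"
    using k assms(3) by (intro mult_right_mono divide_left_mono) auto
  finally show "deviation x u + length x \<le> 2 * length x / k0 * length u" .
qed

lemma deviation_prefix_deep_seq:
  assumes "x \<noteq> []" "1 \<le> K" "length (stages K) \<le> n"
  shows "deviation x (prefix deep_seq n) \<le> 2 * length x / 2 ^ K * n + length (stages K) + 2 * length x + sqrt n"
proof -
  obtain ks z where decomp: "prefix deep_seq n = stages K @ concat (map block ks) @ z"
    and ks: "\<forall>k\<in>set ks. 2 ^ K \<le> k" and z: "real (length z) \<le> sqrt n"
    using prefix_deep_seq_decomp[OF assms(2,3)] by blast
  let ?M = "concat (map block ks)"
  have "length ?M \<le> n"
    using arg_cong[OF decomp, of length] by (simp add: prefix_def)
  then have "2 * length x / 2 ^ K * length ?M \<le> 2 * length x / 2 ^ K * n"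
    by (intro mult_left_mono) simp_all
  moreover have "deviation x ?M \<le> 2 * length x / 2 ^ K * length ?M"
    using deviation_concat_blocks[OF assms(1) ks] by simp
  ultimately have "deviation x ?M \<le> 2 * length x / 2 ^ K * n"
    by linarith
  moreover have "deviation x (stages K @ ?M @ z) \<le> length (stages K) + deviation x ?M + length z + 2 * length x"
    using deviation_append[OF assms(1), of "stages K" "?M @ z"] deviation_append[OF assms(1), of ?M z]
      deviation_le_length[OF assms(1), of "stages K"] deviation_le_length[OF assms(1), of z]
    by linarith
  ultimately show ?thesis
    using z unfolding decomp by linarith
qed

lemma normal_deep_seq: "normal deep_seq"
proof (rule normalI_deviation)
  fix x :: "bool list" and \<epsilon> :: real assume x: "x \<noteq> []" and "0 < \<epsilon>"
  obtain K where "4 * length x / \<epsilon> < 2 ^ K"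
    using real_arch_pow[of 2] by auto
  then have K: "2 * length x / 2 ^ Suc K \<le> \<epsilon> / 2"
    using \<open>0 < \<epsilon>\<close> by (simp add: field_simps)
  define E where "E = length (stages (Suc K))"
  have "\<forall>\<^sub>F n in sequentially. E + 2 * length x + sqrt n \<le> \<epsilon> / 2 * n"
    using \<open>0 < \<epsilon>\<close> by real_asymp
  with eventually_ge_at_top[of E]
  show "\<forall>\<^sub>F n in sequentially. deviation x (prefix deep_seq n) \<le> \<epsilon> * n"
  proof eventually_elim
    case (elim n)
    have "deviation x (prefix deep_seq n) \<le> 2 * length x / 2 ^ Suc K * n + E + 2 * length x + sqrt n"
      using deviation_prefix_deep_seq[OF x, of "Suc K" n] elim(1) by (simp add: E_def)
    also have "2 * length x / 2 ^ Suc K * n \<le> \<epsilon> / 2 * n"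
      using K by (intro mult_right_mono) auto
    finally show ?case
      using elim(2) by linarith
  qed
qed

context ilfst
begin

lemma eventually_half_output:
  "\<forall>\<^sub>F n in sequentially. real n / 2 \<le> length (fst (run \<delta> \<nu> q0 (prefix deep_seq n)))"
proof -
  obtain k0 where k0: "\<And>ks q. \<forall>k\<in>set ks. k0 \<le> k \<Longrightarrow> q \<in> reachable \<Longrightarrow>
      3 * length (concat (map block ks)) \<le> 4 * length (fst (run \<delta> \<nu> q (concat (map block ks))))"
    using length_run_blocks by blast
  define K where "K = Suc k0"
  define E where "E = length (stages K)"
  have "\<forall>\<^sub>F n in sequentially. 3 * E + 3 * sqrt n \<le> n"
    by real_asymp
  with eventually_ge_at_top[of E]
  show ?thesis
  proof eventually_elim
    case (elim n)
    obtain ks z where decomp: "prefix deep_seq n = stages K @ concat (map block ks) @ z"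
      and ks: "\<forall>k\<in>set ks. 2 ^ K \<le> k" and z: "real (length z) \<le> sqrt n"
      using prefix_deep_seq_decomp[of K n] elim(1) by (auto simp: K_def E_def)
    let ?M = "concat (map block ks)"
    let ?q = "snd (run \<delta> \<nu> q0 (stages K))"
    have "k0 \<le> 2 ^ K"
      using less_exp[of k0] unfolding K_def power_Suc by linarith
    then have "\<forall>k\<in>set ks. k0 \<le> k"
      using ks by (auto intro: le_trans)
    then have "3 * length ?M \<le> 4 * length (fst (run \<delta> \<nu> ?q ?M))"
      by (rule k0) (simp add: reachable_def)
    moreover have "length (fst (run \<delta> \<nu> ?q ?M)) \<le> length (fst (run \<delta> \<nu> q0 (prefix deep_seq n)))"
      unfolding decomp by (simp add: run_append)
    moreover have "real n = E + length ?M + length z"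
      using arg_cong[OF decomp, of length] by (simp add: prefix_def E_def)
    ultimately show ?case
      using elim(2) z by linarith
  qed
qed

end

lemma ILFST_output_prefix_deep_seq:
  assumes "ILFST C"
  shows "\<forall>\<^sub>F n in sequentially. real n / 2 \<le> length (fst_out C (prefix deep_seq n))"
proof -
  obtain Q q0 \<delta> \<nu> where C: "C = (Q, q0, \<delta>, \<nu>)"
    by (cases C) auto
  interpret ilfst Q q0 \<delta> \<nu>
    using assms C by unfold_locales simp
  show ?thesis
    using eventually_half_output by (simp add: C fst_out_def)
qed

theorem mainTheorem7:
  shows "\<exists>S :: nat \<Rightarrow> bool. normal S \<and> LZ_deep S"
proof (intro exI conjI)
  show "normal deep_seq"
    by (rule normal_deep_seq)
  show "LZ_deep deep_seq"
    unfolding LZ_deep_def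
  proof (intro exI conjI allI impI)
    fix C assume "ILFST C"
    then have "\<forall>\<^sub>F n in sequentially. real n / 2 \<le> length (fst_out C (prefix deep_seq n))"
      by (rule ILFST_output_prefix_deep_seq)
    with LZ_prefix_deep_seq
    show "\<forall>\<^sub>F n in sequentially. 1 / 4 * real n \<le> length (fst_out C (prefix deep_seq n)) - real (length (LZ (prefix deep_seq n)))"
      by eventually_elim linarith
  qed simp
qed

end
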